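(* Let $A$ be an invertible doubly nonnegative matrix and let $W=[w_{ij}]$ be its sign change matrix. If a row (respectively, column) of $W$ contains no entry greater than $4$ and at most $M$ entries greater than $2$, then the critical exponent of every entry in the corresponding row (respectively, column) of $A$ is at most $M+1$.
   Context: A real matrix is doubly nonnegative if it is symmetric, positive semidefinite, and entry-wise nonnegative. Write $A=UDU^T$ with $U=[u_{ij}]$ real orthogonal and $D=\mathrm{diag}(\lambda_1,\dots,\lambda_n)$, $\lambda_1\ge\cdots\ge\lambda_n>0$; for real $t\ge 0$, $A^t=UD^tU^T$ (so $A^0=I_n$), and $(A^t)_{ij}=\sum_k u_{ik}u_{jk}\lambda_k^t$. The sign change matrix $W$ has $w_{ij}$ equal to the number of sign changes in the coefficient sequence $(u_{i1}u_{j1},\dots,u_{in}u_{jn})$, arranged in decreasing order of the corresponding eigenvalues (zeros ignored). The critical exponent of the $i,j$-entry of $A$ is the least $m\ge 0$ such that $(A^t)_{ij}\ge 0$ for all $t\ge m$. *)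

theory Defs
  imports "Jordan_Normal_Form.Matrix" "Jordan_Normal_Form.Determinant"
begin

definition doubly_nonnegative :: "nat \<Rightarrow> real mat \<Rightarrow> bool" where
  "doubly_nonnegative n A \<longleftrightarrow>
     A \<in> carrier_mat n n \<and> transpose_mat A = A \<and>
     (\<forall>v \<in> carrier_vec n. v \<bullet> (A *\<^sub>v v) \<ge> 0) \<and>
     (\<forall>i<n. \<forall>j<n. A $$ (i,j) \<ge> 0)"

definition real_orthogonal :: "nat \<Rightarrow> real mat \<Rightarrow> bool" where
  "real_orthogonal n U \<longleftrightarrow> U \<in> carrier_mat n n \<and> transpose_mat U * U = 1\<^sub>m n"

definition sign_changes :: "real list \<Rightarrow> nat" where
  "sign_changes xs = (let ys = filter (\<lambda>x. x \<noteq> 0) xs in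
     length (filter (\<lambda>k. ys ! k * ys ! (Suc k) < 0) [0..<length ys - 1]))"

(* sign change matrix entry w_ij for the decomposition A = U D U^T
   (columns of U ordered by decreasing eigenvalue) *)
definition sign_change_entry :: "nat \<Rightarrow> real mat \<Rightarrow> nat \<Rightarrow> nat \<Rightarrow> nat" where
  "sign_change_entry n U i j = sign_changes (map (\<lambda>k. U $$ (i,k) * U $$ (j,k)) [0..<n])"

(* (A^t)_ij = sum_k u_ik u_jk lambda_k^t  for real t \<ge> 0 *)
definition real_power_entry :: "nat \<Rightarrow> real mat \<Rightarrow> (nat \<Rightarrow> real) \<Rightarrow> real \<Rightarrow> nat \<Rightarrow> nat \<Rightarrow> real" where
  "real_power_entry n U lam t i j = (\<Sum>k<n. U $$ (i,k) * U $$ (j,k) * lam k powr t)"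

definition critical_exponent :: "nat \<Rightarrow> real mat \<Rightarrow> (nat \<Rightarrow> real) \<Rightarrow> nat \<Rightarrow> nat \<Rightarrow> real" where
  "critical_exponent n U lam i j =
     (LEAST m::real. m \<ge> 0 \<and> (\<forall>t\<ge>m. real_power_entry n U lam t i j \<ge> 0))"

end

theory Submission
  imports Defs
begin

text \<open>For \<open>i \<noteq> j\<close> the entry \<open>t \<mapsto> (A\<^sup>t)\<^sub>i\<^sub>j = \<Sum>\<^sub>k u\<^sub>i\<^sub>k u\<^sub>j\<^sub>k exp (t ln \<lambda>\<^sub>k)\<close> is an exponential
  sum, so by Descartes' rule of signs for exponential sums (proved with Rolle's theorem) it has at
  most \<open>w\<^sub>i\<^sub>j\<close> real roots, double roots counted twice. It vanishes at \<open>t = 0\<close> and is nonnegative at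
  the integers, as \<open>A\<close> is. Hence for \<open>t \<ge> 1\<close> it is nonnegative if \<open>w\<^sub>i\<^sub>j \<le> 2\<close>, and if
  \<open>w\<^sub>i\<^sub>j \<le> 4\<close> it is not negative at two points at distance \<open>\<ge> 1\<close>. Now if \<open>(A\<^sup>t)\<^sub>i\<^sub>j < 0\<close> with
  \<open>t = s + K\<close>, \<open>0 \<le> s < 1\<close>, \<open>K \<ge> M + 1\<close>, then, as \<open>A\<^sup>r\<^sup>+\<^sup>1 = A\<^sup>r A\<close> with \<open>A \<ge> 0\<close>, every
  \<open>A\<^sup>s\<^sup>+\<^sup>k\<close> with \<open>1 \<le> k \<le> K\<close> has a negative entry in row \<open>i\<close>; these lie in pairwise distinct
  columns \<open>j\<close> with \<open>w\<^sub>i\<^sub>j > 2\<close>, so \<open>K \<le> M\<close>.\<close>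

definition exp_sum :: "nat \<Rightarrow> (nat \<Rightarrow> real) \<Rightarrow> (nat \<Rightarrow> real) \<Rightarrow> real \<Rightarrow> real" where
  "exp_sum n c a x = (\<Sum>k<n. c k * exp (a k * x))"

lemma has_real_derivative_exp_sum:
  "(exp_sum n c a has_real_derivative exp_sum n (\<lambda>k. c k * a k) a x) (at x)"
  unfolding exp_sum_def by (auto intro!: derivative_eq_intros simp: algebra_simps)

lemma continuous_on_exp_sum: "continuous_on S (exp_sum n c a)"
  unfolding exp_sum_def by (intro continuous_intros)

lemma exp_sum_shift_exponents:
  "exp_sum n c (\<lambda>k. a k - a0) x = exp (- a0 * x) * exp_sum n c a x"
  unfolding exp_sum_def sum_distrib_left
  by (intro sum.cong) (simp_all add: exp_add[symmetric] algebra_simps)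

lemma exp_sum_shift_coefficients:
  "exp_sum n (\<lambda>k. c k * (a k - a0)) a x = exp_sum n (\<lambda>k. c k * a k) a x - a0 * exp_sum n c a x"
  unfolding exp_sum_def by (simp add: algebra_simps sum_subtractf sum_distrib_left)

lemma Rolle_roots_interlace:
  fixes g g' :: "real \<Rightarrow> real"
  assumes deriv: "\<And>x. (g has_real_derivative g' x) (at x)"
    and "finite Z" and "\<forall>z\<in>Z. g z = 0"
  shows "\<exists>R. finite R \<and> card Z \<le> card R + 1 \<and> R \<inter> Z = {} \<and> (\<forall>r\<in>R. g' r = 0) \<and>
    (\<forall>r\<in>R. \<exists>z\<in>Z. r < z)"
  using assms(2,3)
proof (induction rule: finite_linorder_max_induct)
  case empty
  show ?case by (intro exI[of _ "{}"]) simp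
next
  case (insert b A)
  then obtain R where R: "finite R" "card A \<le> card R + 1" "R \<inter> A = {}"
      "\<forall>r\<in>R. g' r = 0" "\<forall>r\<in>R. \<exists>z\<in>A. r < z"
    by auto
  show ?case
  proof (cases "A = {}")
    case True
    then show ?thesis by (intro exI[of _ "{}"]) simp
  next
    case False
    define m where "m = Max A"
    have m: "m \<in> A" "m < b" "\<forall>z\<in>A. z \<le> m"
      using Max_in[OF insert.hyps(1) False] insert.hyps by (auto simp: m_def)
    have cont: "continuous_on {m..b} g"
      by (intro continuous_at_imp_continuous_on ballI DERIV_isCont[OF deriv])
    obtain \<xi> where \<xi>: "m < \<xi>" "\<xi> < b" "DERIV g \<xi> :> 0"
    proof (rule Rolle[OF m(2) _ cont, THEN exE])
      show "g m = g b" using insert.prems m(1) by simp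
      show "g differentiable (at x)" for x using deriv real_differentiable_def by blast
    qed blast
    have "g' \<xi> = 0" using DERIV_unique[OF deriv \<xi>(3)] .
    moreover have "\<xi> \<notin> R" using R(5) m(3) \<xi>(1) by fastforce
    moreover have "b \<notin> R" using R(5) insert.hyps(2) by fastforce
    moreover have "\<xi> \<notin> A" using m(3) \<xi>(1) by fastforce
    moreover have "card (insert b A) = card A + 1"
      using insert.hyps by (metis Suc_eq_plus1 card_insert_disjoint less_irrefl)
    ultimately show ?thesis using R \<xi>(1,2) m(2)
      by (intro exI[of _ "insert \<xi> R"]) auto
  qed
qed

(* At most w sign changes: the indices split into consecutive blocks 0, ..., w, labelled
   monotonically by \<beta>, on each of which c has the weak sign \<sigma>. *)
definition sign_blocks :: "nat \<Rightarrow> (nat \<Rightarrow> real) \<Rightarrow> nat \<Rightarrow> bool" where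
  "sign_blocks n c w \<longleftrightarrow> (\<exists>\<beta> \<sigma>. (\<forall>k l. k \<le> l \<and> l < n \<longrightarrow> \<beta> k \<le> \<beta> l) \<and> (\<forall>k<n. \<beta> k \<le> w) \<and>
     (\<forall>m. \<sigma> m = 1 \<or> \<sigma> m = -1) \<and> (\<forall>k<n. 0 \<le> \<sigma> (\<beta> k) * c k))"

lemma sign_blocksE:
  assumes "sign_blocks n c w"
  obtains \<beta> :: "nat \<Rightarrow> nat" and \<sigma> :: "nat \<Rightarrow> real"
  where "\<forall>k l. k \<le> l \<and> l < n \<longrightarrow> \<beta> k \<le> \<beta> l" "\<forall>k<n. \<beta> k \<le> w"
    "\<forall>m. \<sigma> m = 1 \<or> \<sigma> m = -1" "\<forall>k<n. 0 \<le> \<sigma> (\<beta> k) * c k"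
  using assms unfolding sign_blocks_def by (elim exE conjE) (rule that; assumption)

lemma exp_sum_nonzero_if_sign_blocks_0:
  assumes "sign_blocks n c 0" and "exp_sum n c a x0 \<noteq> 0"
  shows "exp_sum n c a x \<noteq> 0"
proof
  assume root: "exp_sum n c a x = 0"
  obtain \<beta> :: "nat \<Rightarrow> nat" and \<sigma> where \<beta>: "\<forall>k<n. \<beta> k \<le> 0" and \<sigma>: "\<forall>m. \<sigma> m = 1 \<or> \<sigma> m = -1"
      and signs: "\<forall>k<n. 0 \<le> \<sigma> (\<beta> k) * c k"
    using sign_blocksE[OF assms(1)] by metis
  have same_sign: "\<forall>k<n. 0 \<le> \<sigma> 0 * c k"
    using \<beta> signs by simp
  have "(\<Sum>k<n. \<sigma> 0 * c k * exp (a k * x)) = \<sigma> 0 * exp_sum n c a x"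
    unfolding exp_sum_def by (simp add: sum_distrib_left mult.assoc)
  then have "\<forall>k\<in>{..<n}. \<sigma> 0 * c k * exp (a k * x) = 0"
    using root same_sign sum_nonneg_eq_0_iff[of "{..<n}" "\<lambda>k. \<sigma> 0 * c k * exp (a k * x)"]
    by simp
  then have "\<forall>k<n. c k = 0" using \<sigma>[rule_format, of 0] by auto
  then show False using assms(2) unfolding exp_sum_def by simp
qed

lemma separating_value:
  fixes a :: "nat \<Rightarrow> real" and \<beta> :: "nat \<Rightarrow> nat"
  assumes a: "\<forall>k l. k \<le> l \<and> l < n \<longrightarrow> a l \<le> a k"
    and \<beta>: "\<forall>k l. k \<le> l \<and> l < n \<longrightarrow> \<beta> k \<le> \<beta> l"
  obtains a0 where "\<forall>k<n. \<beta> k = 0 \<longrightarrow> a0 \<le> a k" "\<forall>k<n. \<beta> k \<noteq> 0 \<longrightarrow> a k \<le> a0"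
proof (cases "\<exists>k<n. \<beta> k \<noteq> 0")
  case True
  define k0 where "k0 = (LEAST k. k < n \<and> \<beta> k \<noteq> 0)"
  have k0: "k0 < n" "\<beta> k0 \<noteq> 0" "\<forall>k. k < n \<and> \<beta> k \<noteq> 0 \<longrightarrow> k0 \<le> k"
    using LeastI_ex[OF True] unfolding k0_def by (auto intro: Least_le)
  have before_k0: "k < k0" if "k < n" "\<beta> k = 0" for k
    using \<beta> k0 that by (metis le_zero_eq not_le_imp_less)
  show ?thesis
    by (intro that[of "a k0"]; meson a k0 before_k0 less_imp_le)
next
  case False
  then show ?thesis using a by (intro that[of "a (n - 1)"]) auto
qed

lemma sign_blocks_Suc_cases:
  assumes "sign_blocks n c (Suc w)" and a: "\<forall>k l. k \<le> l \<and> l < n \<longrightarrow> a l \<le> a k"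
  shows "sign_blocks n c w \<or> (\<exists>a0. sign_blocks n (\<lambda>k. c k * (a k - a0)) w)"
proof -
  obtain \<beta> :: "nat \<Rightarrow> nat" and \<sigma> where \<beta>: "\<forall>k l. k \<le> l \<and> l < n \<longrightarrow> \<beta> k \<le> \<beta> l"
      "\<forall>k<n. \<beta> k \<le> Suc w" and \<sigma>: "\<forall>m. \<sigma> m = 1 \<or> \<sigma> m = -1"
      and signs: "\<forall>k<n. 0 \<le> \<sigma> (\<beta> k) * c k"
    by (rule sign_blocksE[OF assms(1)])
  have \<beta>': "\<forall>k l. k \<le> l \<and> l < n \<longrightarrow> \<beta> k - 1 \<le> \<beta> l - 1" "\<forall>k<n. \<beta> k - 1 \<le> w"
    using \<beta> by (auto intro: diff_le_mono)
  show ?thesis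
  proof (cases "\<sigma> 0 = \<sigma> 1")
    case True
    have "0 \<le> \<sigma> (Suc (\<beta> k - 1)) * c k" if "k < n" for k
      using signs that True by (cases "\<beta> k") auto
    then have "sign_blocks n c w"
      unfolding sign_blocks_def using \<beta>' \<sigma> by (intro exI[of _ "\<lambda>k. \<beta> k - 1"] exI[of _ "\<sigma> \<circ> Suc"]) auto
    then show ?thesis ..
  next
    case False
    then have \<sigma>1: "\<sigma> 1 = - \<sigma> 0" using \<sigma> by (metis minus_minus)
    obtain a0 where a0: "\<forall>k<n. \<beta> k = 0 \<longrightarrow> a0 \<le> a k" "\<forall>k<n. \<beta> k \<noteq> 0 \<longrightarrow> a k \<le> a0"
      using separating_value[OF a \<beta>(1)] by blast
    define \<sigma>' where "\<sigma>' m = (if m = 0 then \<sigma> 0 else - \<sigma> (Suc m))" for m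
    \<comment> \<open>The factor \<open>a k - a0\<close> keeps the sign on block 0 and flips it on all later blocks,
      so that blocks 0 and 1 merge.\<close>
    have "0 \<le> \<sigma>' (\<beta> k - 1) * (c k * (a k - a0))" if "k < n" for k
    proof (cases "\<beta> k")
      case 0
      have "0 \<le> \<sigma> 0 * c k" "0 \<le> a k - a0" using signs a0 that 0 by auto
      then have "0 \<le> (\<sigma> 0 * c k) * (a k - a0)" by simp
      then show ?thesis using 0 by (simp add: \<sigma>'_def mult.assoc)
    next
      case (Suc m)
      have "0 \<le> \<sigma> (\<beta> k) * c k" "0 \<le> a0 - a k" using signs a0 that Suc by auto
      then have "0 \<le> (\<sigma> (\<beta> k) * c k) * (a0 - a k)" by simp
      then show ?thesis using Suc \<sigma>1 by (cases m) (simp_all add: \<sigma>'_def algebra_simps)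
    qed
    then have "sign_blocks n (\<lambda>k. c k * (a k - a0)) w"
      unfolding sign_blocks_def using \<beta>' \<sigma>
      by (intro exI[of _ "\<lambda>k. \<beta> k - 1"] exI[of _ \<sigma>']) (auto simp: \<sigma>'_def)
    then show ?thesis by blast
  qed
qed

lemma exp_sum_root_count:
  assumes "\<forall>k l. k \<le> l \<and> l < n \<longrightarrow> a l \<le> a k" and "sign_blocks n c w"
    and "exp_sum n c a x0 \<noteq> 0" and "finite Z" and "D \<subseteq> Z"
    and "\<forall>z\<in>Z. exp_sum n c a z = 0" and "\<forall>z\<in>D. exp_sum n (\<lambda>k. c k * a k) a z = 0"
  shows "card Z + card D \<le> w"
  using assms
proof (induction w arbitrary: c a Z D x0)
  case 0
  have "Z = {}" using exp_sum_nonzero_if_sign_blocks_0[OF "0.prems"(2,3)] "0.prems"(6) by blast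
  then show ?case using "0.prems"(5) by simp
next
  case (Suc w)
  consider "sign_blocks n c w" | a0 where "sign_blocks n (\<lambda>k. c k * (a k - a0)) w"
    using sign_blocks_Suc_cases[OF Suc.prems(2,1)] by blast
  then show ?case
  proof cases
    case 1
    then show ?thesis using Suc.IH[OF Suc.prems(1) 1 Suc.prems(3-7)] by simp
  next
    case 2
    show ?thesis
    proof (cases "Z = {}")
      case True
      then show ?thesis using Suc.prems(5) by simp
    next
      case False
      then obtain z0 where "z0 \<in> Z" by blast
      define b where "b = (\<lambda>k. a k - a0)"
      define d where "d = (\<lambda>k. c k * (a k - a0))"
      \<comment> \<open>\<open>exp_sum n c b x = exp (- a0 * x) * exp_sum n c a x\<close> has the roots of the original
        sum, and its derivative \<open>exp_sum n d b\<close> has one sign change less.\<close>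
      have g_deriv: "(exp_sum n c b has_real_derivative exp_sum n d b x) (at x)" for x
        unfolding d_def b_def by (rule has_real_derivative_exp_sum)
      have g_eq: "exp_sum n c b x = exp (- a0 * x) * exp_sum n c a x" for x
        unfolding b_def by (rule exp_sum_shift_exponents)
      obtain R where R: "finite R" "card Z \<le> card R + 1" "R \<inter> Z = {}" "\<forall>r\<in>R. exp_sum n d b r = 0"
        using Rolle_roots_interlace[OF g_deriv Suc.prems(4)] Suc.prems(6) g_eq by force
      have "exp_sum n d b x = exp (- a0 * x) * (exp_sum n (\<lambda>k. c k * a k) a x - a0 * exp_sum n c a x)"
        for x unfolding d_def b_def exp_sum_shift_exponents exp_sum_shift_coefficients ..
      then have D: "\<forall>z\<in>D. exp_sum n d b z = 0"
        using Suc.prems(5-7) by auto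
      have "\<exists>x1. exp_sum n d b x1 \<noteq> 0"
      proof (rule ccontr)
        assume "\<nexists>x1. exp_sum n d b x1 \<noteq> 0"
        then have "exp_sum n c b x0 = exp_sum n c b z0"
          using g_deriv by (intro DERIV_isconst_all[of "exp_sum n c b"]) auto
        then show False using \<open>z0 \<in> Z\<close> Suc.prems(3,6) g_eq by simp
      qed
      then obtain x1 where x1: "exp_sum n d b x1 \<noteq> 0" by blast
      have "card (R \<union> D) + card ({} :: real set) \<le> w"
      proof (rule Suc.IH[OF _ _ x1])
        show "\<forall>k l. k \<le> l \<and> l < n \<longrightarrow> b l \<le> b k" using Suc.prems(1) by (simp add: b_def)
        show "sign_blocks n d w" using 2 by (simp add: d_def)
      qed (use R D Suc.prems(4,5) finite_subset in auto)
      moreover have "card (R \<union> D) = card R + card D"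
        using R(1,3) Suc.prems(4,5) by (meson card_Un_disjoint disjoint_iff finite_subset subsetD)
      ultimately show ?thesis using R(2) by simp
    qed
  qed
qed

(* s is the last nonzero entry before the list, 0 if there is none *)
fun sign_changes_from :: "real \<Rightarrow> real list \<Rightarrow> nat" where
  "sign_changes_from s [] = 0"
| "sign_changes_from s (x # xs) =
     (if x = 0 then sign_changes_from s xs else (if s * x < 0 then 1 else 0) + sign_changes_from x xs)"

lemma sign_changes_from_filter_nonzero:
  "sign_changes_from s (filter (\<lambda>x. x \<noteq> 0) xs) = sign_changes_from s xs"
  by (induction xs arbitrary: s) auto

lemma sign_changes_from_nonzero:
  assumes "\<forall>x\<in>set xs. x \<noteq> 0"
  shows "length (filter (\<lambda>k. (y # xs) ! k * (y # xs) ! Suc k < 0) [0..<length xs])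
    = sign_changes_from y xs"
  using assms
proof (induction xs arbitrary: y)
  case Nil
  then show ?case by simp
next
  case (Cons z zs)
  have "[0..<length (z # zs)] = 0 # map Suc [0..<length zs]"
    by (simp add: map_Suc_upt upt_conv_Cons del: upt_Suc)
  then have "length (filter (\<lambda>k. (y # z # zs) ! k * (y # z # zs) ! Suc k < 0) [0..<length (z # zs)])
      = (if y * z < 0 then 1 else 0)
        + length (filter (\<lambda>k. (z # zs) ! k * (z # zs) ! Suc k < 0) [0..<length zs])"
    by (simp add: filter_map o_def)
  then show ?case using Cons by simp
qed

lemma sign_changes_eq_sign_changes_from: "sign_changes xs = sign_changes_from 0 xs"
proof -
  define ys where "ys = filter (\<lambda>x. x \<noteq> 0) xs"
  have "\<forall>x\<in>set ys. x \<noteq> 0" unfolding ys_def by simp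
  have "sign_changes xs = length (filter (\<lambda>k. ys ! k * ys ! Suc k < 0) [0..<length ys - 1])"
    unfolding sign_changes_def ys_def Let_def ..
  also have "\<dots> = sign_changes_from 0 ys"
  proof (cases ys)
    case (Cons y zs)
    then have "y \<noteq> 0" and nonzero: "\<forall>x\<in>set zs. x \<noteq> 0"
      using \<open>\<forall>x\<in>set ys. x \<noteq> 0\<close> by simp_all
    then show ?thesis
      unfolding Cons length_Cons diff_Suc_1 sign_changes_from_nonzero[OF nonzero] by simp
  qed simp
  also have "\<dots> = sign_changes_from 0 xs"
    unfolding ys_def by (rule sign_changes_from_filter_nonzero)
  finally show ?thesis .
qed

lemma sign_blocks_list:
  "\<exists>(\<beta> :: nat \<Rightarrow> nat) (\<sigma> :: nat \<Rightarrow> real).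
     (\<forall>k l. k \<le> l \<and> l < length xs \<longrightarrow> \<beta> k \<le> \<beta> l) \<and>
     (\<forall>k<length xs. \<beta> k \<le> sign_changes_from s xs) \<and> (\<forall>m. \<sigma> m = 1 \<or> \<sigma> m = -1) \<and>
     (\<forall>k<length xs. 0 \<le> \<sigma> (\<beta> k) * xs ! k) \<and> (s \<noteq> 0 \<longrightarrow> \<sigma> 0 = sgn s)"
proof (induction xs arbitrary: s)
  case Nil
  show ?case
    by (intro exI[of _ "\<lambda>k. 0"] exI[of _ "\<lambda>m. if s \<noteq> 0 then sgn s else 1"]) (auto simp: sgn_real_def)
next
  case (Cons x xs)
  define s' where "s' = (if x = 0 then s else x)"
  obtain \<beta> :: "nat \<Rightarrow> nat" and \<sigma> :: "nat \<Rightarrow> real"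
    where \<beta>: "\<forall>k l. k \<le> l \<and> l < length xs \<longrightarrow> \<beta> k \<le> \<beta> l"
      "\<forall>k<length xs. \<beta> k \<le> sign_changes_from s' xs"
      and \<sigma>: "\<forall>m. \<sigma> m = 1 \<or> \<sigma> m = -1" and signs: "\<forall>k<length xs. 0 \<le> \<sigma> (\<beta> k) * xs ! k"
      and \<sigma>0: "s' \<noteq> 0 \<longrightarrow> \<sigma> 0 = sgn s'"
    using Cons.IH[of s'] by (elim exE conjE) (rule that; assumption)
  have x_sign: "0 \<le> \<sigma> 0 * x"
    using \<sigma>0 by (cases "x = 0") (auto simp: s'_def sgn_real_def)
  show ?case
  proof (cases "s * x < 0")
    case False
    have "s \<noteq> 0 \<longrightarrow> \<sigma> 0 = sgn s"
      using False \<sigma>0 by (auto simp: s'_def sgn_real_def mult_less_0_iff) 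
    moreover have "\<forall>k l. k \<le> l \<and> l < Suc (length xs) \<longrightarrow> case_nat 0 \<beta> k \<le> case_nat 0 \<beta> l"
      using \<beta>(1) by (auto split: nat.split)
    ultimately show ?thesis using False \<beta>(2) \<sigma> signs x_sign
      by (intro exI[of _ "case_nat 0 \<beta>"] exI[of _ \<sigma>]) (auto simp: s'_def less_Suc_eq_0_disj)
  next
    case True
    \<comment> \<open>A sign change at \<open>x\<close>: an extra block for the previous sign is put in front.\<close>
    then have "s \<noteq> 0" "x \<noteq> 0" by auto
    have "\<forall>k l. k \<le> l \<and> l < Suc (length xs) \<longrightarrow> case_nat 1 (\<lambda>k. \<beta> k + 1) k \<le> case_nat 1 (\<lambda>k. \<beta> k + 1) l"
      using \<beta>(1) by (auto split: nat.split)
    then show ?thesis using True \<open>s \<noteq> 0\<close> \<open>x \<noteq> 0\<close> \<beta>(2) \<sigma> signs x_sign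
      by (intro exI[of _ "case_nat 1 (\<lambda>k. \<beta> k + 1)"] exI[of _ "case_nat (sgn s) \<sigma>"])
        (auto simp: s'_def less_Suc_eq_0_disj sgn_real_def split: nat.split)
  qed
qed

lemma sign_blocks_sign_changes: "sign_blocks n c (sign_changes (map c [0..<n]))"
proof -
  obtain \<beta> :: "nat \<Rightarrow> nat" and \<sigma> :: "nat \<Rightarrow> real"
    where "\<forall>k l. k \<le> l \<and> l < n \<longrightarrow> \<beta> k \<le> \<beta> l"
      "\<forall>k<n. \<beta> k \<le> sign_changes_from 0 (map c [0..<n])"
      "\<forall>m. \<sigma> m = 1 \<or> \<sigma> m = -1" "\<forall>k<n. 0 \<le> \<sigma> (\<beta> k) * c k"
    using sign_blocks_list[of "map c [0..<n]" 0] by auto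
  then show ?thesis
    unfolding sign_blocks_def sign_changes_eq_sign_changes_from by blast
qed

lemma critical_point_if_only_root_between_negatives:
  fixes f f' :: "real \<Rightarrow> real"
  assumes deriv: "\<And>t. (f has_real_derivative f' t) (at t)"
    and "x < m" "m < y" "f x < 0" "f y < 0" "f m = 0"
    and only_root: "\<forall>p. x < p \<and> p < y \<and> f p = 0 \<longrightarrow> p = m"
  shows "f' m = 0"
proof (rule DERIV_local_max[OF deriv])
  have cont: "continuous_on S f" for S
    by (intro continuous_at_imp_continuous_on ballI DERIV_isCont[OF deriv])
  show "0 < min (m - x) (y - m)" using assms(2,3) by simp
  show "\<forall>p. \<bar>m - p\<bar> < min (m - x) (y - m) \<longrightarrow> f p \<le> f m"
  proof (intro allI impI)
    fix p assume "\<bar>m - p\<bar> < min (m - x) (y - m)"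
    then have p: "x < p" "p < y" by auto
    show "f p \<le> f m"
    proof (rule ccontr)
      \<comment> \<open>A positive value at \<open>p \<noteq> m\<close> would yield a further root between \<open>p\<close> and \<open>x\<close> or \<open>y\<close>.\<close>
      assume "\<not> f p \<le> f m"
      then have "0 < f p" using assms(6) by simp
      obtain q1 where "x \<le> q1" "q1 \<le> p" "f q1 = 0"
        using IVT'[of f x 0 p, OF _ _ _ cont] \<open>0 < f p\<close> assms(4) p by auto
      moreover obtain q2 where "p \<le> q2" "q2 \<le> y" "f q2 = 0"
        using IVT2'[of f y 0 p, OF _ _ _ cont] \<open>0 < f p\<close> assms(5) p by auto
      moreover have "q1 \<noteq> x" "q1 \<noteq> p" "q2 \<noteq> p" "q2 \<noteq> y"
        using calculation \<open>0 < f p\<close> assms(4,5) by auto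
      ultimately have "x < q1" "q1 < q2" "q2 < y" by linarith+
      then have "q1 = m" "q2 = m" using only_root \<open>f q1 = 0\<close> \<open>f q2 = 0\<close> by auto
      then show False using \<open>q1 < q2\<close> by simp
    qed
  qed
qed

(* The properties of an off-diagonal entry t \<mapsto> (A^t)_ij used below, with w = w_ij. *)
context
  fixes f f' :: "real \<Rightarrow> real" and w :: nat
  assumes deriv: "\<And>t. (f has_real_derivative f' t) (at t)"
    and root_count: "\<And>x0 Z D. f x0 \<noteq> 0 \<Longrightarrow> finite Z \<Longrightarrow> D \<subseteq> Z \<Longrightarrow> \<forall>z\<in>Z. f z = 0 \<Longrightarrow>
      \<forall>z\<in>D. f' z = 0 \<Longrightarrow> card Z + card D \<le> w"
    and root_at_0: "f 0 = 0"
    and nonneg_at_nat: "\<And>q. 0 \<le> f (real q)"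
begin

lemma roots_around_negative_value:
  assumes "f x < 0" and "0 \<le> x"
  obtains z0 z1 where "x - 1 < z0" "z0 < x" "x < z1" "z1 < x + 1" "f z0 = 0" "f z1 = 0"
proof -
  have cont: "continuous_on S f" for S
    by (intro continuous_at_imp_continuous_on ballI DERIV_isCont[OF deriv])
  define q where "q = nat \<lfloor>x\<rfloor>"
  have q: "real q \<le> x" "x < real q + 1" using assms(2) unfolding q_def by linarith+
  have "0 \<le> f (real q)" "0 \<le> f (real q + 1)"
    using nonneg_at_nat[of q] nonneg_at_nat[of "Suc q"] by (simp_all add: add.commute)
  then obtain z0 z1 where "real q \<le> z0" "z0 \<le> x" "f z0 = 0" "x \<le> z1" "z1 \<le> real q + 1" "f z1 = 0"
    using IVT2'[of f x 0 "real q", OF _ _ _ cont] IVT'[of f x 0 "real q + 1", OF _ _ _ cont]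
      assms(1) q by auto
  moreover have "z0 \<noteq> x" "z1 \<noteq> x" using calculation assms(1) by auto
  ultimately show ?thesis using q by (intro that[of z0 z1]) auto
qed

lemma nonneg_if_root_count_le_2:
  assumes "w \<le> 2" and "1 \<le> x"
  shows "0 \<le> f x"
proof (rule ccontr)
  assume "\<not> 0 \<le> f x"
  then have "f x < 0" by simp
  then obtain z0 z1 where z: "x - 1 < z0" "z0 < x" "x < z1" "f z0 = 0" "f z1 = 0"
    using roots_around_negative_value assms(2) by (metis order.trans zero_le_one)
  have "card {0, z0, z1} + card ({} :: real set) \<le> w"
    using root_count[of x "{0, z0, z1}" "{}"] \<open>f x < 0\<close> z root_at_0 by simp
  moreover have "card {0, z0, z1} = 3" using z assms(2) by auto
  ultimately show False using assms(1) by simp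
qed

lemma not_negative_twice:
  assumes "w \<le> 4" and "1 \<le> x" "x + 1 \<le> y" and "f x < 0" "f y < 0"
  shows False
proof -
  obtain z0 m where z0: "x - 1 < z0" "z0 < x" "f z0 = 0" and m: "x < m" "m < x + 1" "f m = 0"
    using roots_around_negative_value[OF assms(4)] assms(2) by (metis order.trans zero_le_one)
  obtain z3 where z3: "y < z3" "f z3 = 0"
    using roots_around_negative_value[OF assms(5)] assms(2,3) by (metis order.trans zero_le_one add_increasing2)
  have "m < y" using m assms(3) by simp
  \<comment> \<open>Besides \<open>0\<close>, \<open>z0\<close>, \<open>m\<close> and \<open>z3\<close> there is either a further root between \<open>x\<close> and \<open>y\<close>,
    or \<open>m\<close> is a double root.\<close>
  show False
  proof (cases "\<exists>m'. x < m' \<and> m' < y \<and> m' \<noteq> m \<and> f m' = 0")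
    case True
    then obtain m' where m': "x < m'" "m' < y" "m' \<noteq> m" "f m' = 0" by blast
    have "card {0, z0, m, m', z3} + card ({} :: real set) \<le> w"
      using root_count[of x "{0, z0, m, m', z3}" "{}"] \<open>f x < 0\<close> z0 m m' z3 root_at_0 by simp
    moreover have "card {0, z0, m, m', z3} = 5" using z0 m m' z3 \<open>m < y\<close> assms(2) by auto
    ultimately show False using assms(1) by simp
  next
    case False
    then have "f' m = 0"
      using critical_point_if_only_root_between_negatives[OF deriv] m \<open>m < y\<close> assms(4,5) by blast
    then have "card {0, z0, m, z3} + card {m} \<le> w"
      using root_count[of x "{0, z0, m, z3}" "{m}"] \<open>f x < 0\<close> z0 m z3 root_at_0 by simp
    moreover have "card {0, z0, m, z3} = 4" using z0 m z3 \<open>m < y\<close> assms(2) by auto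
    ultimately show False using assms(1) by simp
  qed
qed

end

lemma real_power_entry_diag_nonneg: "0 \<le> real_power_entry n U lam t i i"
  unfolding real_power_entry_def by (intro sum_nonneg) simp

lemma sign_change_entry_commute: "sign_change_entry n U j i = sign_change_entry n U i j"
  unfolding sign_change_entry_def by (simp only: mult.commute)

lemma critical_exponent_commute: "critical_exponent n U lam j i = critical_exponent n U lam i j"
  unfolding critical_exponent_def real_power_entry_def by (simp only: mult.commute)

lemma real_orthogonal_carrier: "real_orthogonal n U \<Longrightarrow> U \<in> carrier_mat n n"
  unfolding real_orthogonal_def by simp

lemma real_orthogonal_columns:
  assumes "real_orthogonal n U" "k < n" "p < n"
  shows "(\<Sum>l<n. U $$ (l, k) * U $$ (l, p)) = (if k = p then 1 else 0)"
proof -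
  have "(transpose_mat U * U) $$ (k, p) = (\<Sum>l<n. U $$ (l, k) * U $$ (l, p))"
    using real_orthogonal_carrier[OF assms(1)] assms(2,3)
    by (simp add: scalar_prod_def atLeast0LessThan)
  then show ?thesis using assms unfolding real_orthogonal_def by simp
qed

lemma real_orthogonal_rows:
  assumes "real_orthogonal n U" "i < n" "j < n"
  shows "(\<Sum>k<n. U $$ (i, k) * U $$ (j, k)) = (if i = j then 1 else 0)"
proof -
  have U: "U \<in> carrier_mat n n" using real_orthogonal_carrier[OF assms(1)] .
  then have "U * transpose_mat U = 1\<^sub>m n"
    using mat_mult_left_right_inverse[of "transpose_mat U" n U] assms(1)
    unfolding real_orthogonal_def by simp
  moreover have "(U * transpose_mat U) $$ (i, j) = (\<Sum>k<n. U $$ (i, k) * U $$ (j, k))"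
    using U assms(2,3) by (simp add: scalar_prod_def atLeast0LessThan)
  ultimately show ?thesis using assms(2,3) by simp
qed

context
  fixes n :: nat and A U :: "real mat" and lam :: "nat \<Rightarrow> real"
  assumes dnn: "doubly_nonnegative n A"
    and orth: "real_orthogonal n U"
    and decomp: "A = U * mat_diag n lam * transpose_mat U"
    and pos: "\<forall>k<n. lam k > 0"
begin

lemma entry_eq_spectral_sum:
  assumes "l < n" "j < n"
  shows "A $$ (l, j) = (\<Sum>p<n. U $$ (l, p) * lam p * U $$ (j, p))"
proof -
  have U: "U \<in> carrier_mat n n" using real_orthogonal_carrier[OF orth] .
  have "U * mat_diag n lam = mat n n (\<lambda>(i, j). U $$ (i, j) * lam j)"
    by (rule mat_diag_mult_right[OF U])
  then show ?thesis unfolding decomp using U assms by (simp add: scalar_prod_def atLeast0LessThan)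
qed

lemma real_power_entry_eq_exp_sum:
  "real_power_entry n U lam t i j = exp_sum n (\<lambda>k. U $$ (i, k) * U $$ (j, k)) (\<lambda>k. ln (lam k)) t"
  unfolding real_power_entry_def exp_sum_def
  by (intro sum.cong) (use pos in \<open>auto simp: powr_def mult.commute\<close>)

lemma real_power_entry_add_1:
  assumes "i < n" "j < n"
  shows "real_power_entry n U lam (t + 1) i j = (\<Sum>l<n. real_power_entry n U lam t i l * A $$ (l, j))"
proof -
  let ?f = "\<lambda>k p. U $$ (i, k) * lam k powr t * lam p * U $$ (j, p)"
  have "(\<Sum>l<n. real_power_entry n U lam t i l * A $$ (l, j))
      = (\<Sum>l<n. \<Sum>p<n. \<Sum>k<n. ?f k p * (U $$ (l, k) * U $$ (l, p)))"
    unfolding real_power_entry_def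
    by (intro sum.cong) (simp_all add: entry_eq_spectral_sum assms sum_product mult_ac)
  also have "\<dots> = (\<Sum>l<n. \<Sum>k<n. \<Sum>p<n. ?f k p * (U $$ (l, k) * U $$ (l, p)))"
    by (intro sum.cong refl sum.swap)
  also have "\<dots> = (\<Sum>k<n. \<Sum>p<n. \<Sum>l<n. ?f k p * (U $$ (l, k) * U $$ (l, p)))"
    by (subst sum.swap) (intro sum.cong refl sum.swap)
  also have "\<dots> = (\<Sum>k<n. \<Sum>p<n. ?f k p * (\<Sum>l<n. U $$ (l, k) * U $$ (l, p)))"
    by (simp only: sum_distrib_left)
  also have "\<dots> = (\<Sum>k<n. ?f k k)"
    by (simp add: real_orthogonal_columns[OF orth] if_distrib cong: if_cong)
  also have "\<dots> = real_power_entry n U lam (t + 1) i j"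
    unfolding real_power_entry_def
    by (intro sum.cong) (use pos in \<open>auto simp: powr_add mult_ac\<close>)
  finally show ?thesis by simp
qed

lemma real_power_entry_0:
  assumes "i < n" "j < n"
  shows "real_power_entry n U lam 0 i j = (if i = j then 1 else 0)"
proof -
  have "real_power_entry n U lam 0 i j = (\<Sum>k<n. U $$ (i, k) * U $$ (j, k))"
    unfolding real_power_entry_def by (intro sum.cong) (use pos in auto)
  then show ?thesis using real_orthogonal_rows[OF orth assms] by simp
qed

lemma real_power_entry_row_nonneg_add_nat:
  assumes "i < n" and "\<forall>j<n. 0 \<le> real_power_entry n U lam t i j"
  shows "\<forall>j<n. 0 \<le> real_power_entry n U lam (t + real q) i j"
proof (induction q)
  case 0
  then show ?case using assms(2) by simp
next
  case (Suc q)
  have "0 \<le> real_power_entry n U lam (t + real q + 1) i j" if "j < n" for j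
  proof -
    have "\<forall>l<n. 0 \<le> A $$ (l, j)" using dnn that unfolding doubly_nonnegative_def by blast
    then show ?thesis
      using Suc real_power_entry_add_1[OF assms(1) that] by (auto intro!: sum_nonneg)
  qed
  then show ?case by (simp add: ac_simps)
qed

lemma real_power_entry_nat_nonneg:
  assumes "i < n" "j < n"
  shows "0 \<le> real_power_entry n U lam (real q) i j"
  using real_power_entry_row_nonneg_add_nat[OF assms(1), of 0 q] real_power_entry_0 assms by simp

lemma real_power_entry_root_count:
  assumes "\<forall>k l. k \<le> l \<and> l < n \<longrightarrow> lam l \<le> lam k"
    and "real_power_entry n U lam x0 i j \<noteq> 0" and "finite Z" and "D \<subseteq> Z"
    and "\<forall>z\<in>Z. real_power_entry n U lam z i j = 0"
    and "\<forall>z\<in>D. exp_sum n (\<lambda>k. U $$ (i, k) * U $$ (j, k) * ln (lam k)) (\<lambda>k. ln (lam k)) z = 0"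
  shows "card Z + card D \<le> sign_change_entry n U i j"
proof (rule exp_sum_root_count)
  show "\<forall>k l. k \<le> l \<and> l < n \<longrightarrow> ln (lam l) \<le> ln (lam k)"
    using assms(1) pos by auto
  show "sign_blocks n (\<lambda>k. U $$ (i, k) * U $$ (j, k)) (sign_change_entry n U i j)"
    unfolding sign_change_entry_def by (rule sign_blocks_sign_changes)
qed (use assms in \<open>simp_all add: real_power_entry_eq_exp_sum\<close>)

lemma off_diagonal_entry_nonneg:
  assumes "\<forall>k l. k \<le> l \<and> l < n \<longrightarrow> lam l \<le> lam k"
    and "i < n" "j < n" "i \<noteq> j" and "sign_change_entry n U i j \<le> 2" and "1 \<le> t"
  shows "0 \<le> real_power_entry n U lam t i j"
proof (rule nonneg_if_root_count_le_2[where f = "\<lambda>t. real_power_entry n U lam t i j" and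
      f' = "exp_sum n (\<lambda>k. U $$ (i, k) * U $$ (j, k) * ln (lam k)) (\<lambda>k. ln (lam k))"])
  show "((\<lambda>t. real_power_entry n U lam t i j) has_real_derivative
      exp_sum n (\<lambda>k. U $$ (i, k) * U $$ (j, k) * ln (lam k)) (\<lambda>k. ln (lam k)) x) (at x)" for x
    unfolding real_power_entry_eq_exp_sum by (rule has_real_derivative_exp_sum)
qed (use assms real_power_entry_root_count real_power_entry_0 real_power_entry_nat_nonneg in auto)

lemma off_diagonal_entry_not_negative_twice:
  assumes "\<forall>k l. k \<le> l \<and> l < n \<longrightarrow> lam l \<le> lam k"
    and "i < n" "j < n" "i \<noteq> j" and "sign_change_entry n U i j \<le> 4"
    and "1 \<le> x" "x + 1 \<le> y"
    and "real_power_entry n U lam x i j < 0" "real_power_entry n U lam y i j < 0"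
  shows False
proof (rule not_negative_twice[where f = "\<lambda>t. real_power_entry n U lam t i j" and
      w = "sign_change_entry n U i j" and x = x and y = y and
      f' = "exp_sum n (\<lambda>k. U $$ (i, k) * U $$ (j, k) * ln (lam k)) (\<lambda>k. ln (lam k))"])
  show "((\<lambda>t. real_power_entry n U lam t i j) has_real_derivative
      exp_sum n (\<lambda>k. U $$ (i, k) * U $$ (j, k) * ln (lam k)) (\<lambda>k. ln (lam k)) t) (at t)" for t
    unfolding real_power_entry_eq_exp_sum by (rule has_real_derivative_exp_sum)
qed (use assms real_power_entry_root_count real_power_entry_0 real_power_entry_nat_nonneg in auto)

lemma real_power_entry_row_nonneg:
  assumes sorted: "\<forall>k l. k \<le> l \<and> l < n \<longrightarrow> lam l \<le> lam k"
    and i: "i < n" and le_4: "\<forall>j<n. sign_change_entry n U i j \<le> 4"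
    and card_gt_2: "card {j. j < n \<and> sign_change_entry n U i j > 2} \<le> M"
    and t: "real M + 1 \<le> t" and "j0 < n"
  shows "0 \<le> real_power_entry n U lam t i j0"
proof (rule ccontr)
  assume "\<not> 0 \<le> real_power_entry n U lam t i j0"
  then have neg_t: "real_power_entry n U lam t i j0 < 0" by simp
  define K where "K = nat \<lfloor>t\<rfloor>"
  define s where "s = t - real K"
  have s: "0 \<le> s" "s < 1" and K: "M + 1 \<le> K" using t unfolding s_def K_def by linarith+
  \<comment> \<open>Nonnegativity of row \<open>i\<close> is inherited by \<open>A\<^sup>t\<^sup>+\<^sup>1 = A\<^sup>t A\<close>, so every \<open>A\<^sup>s\<^sup>+\<^sup>k\<close>
    with \<open>1 \<le> k \<le> K\<close> has a negative entry in row \<open>i\<close>.\<close>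
  have "\<exists>j<n. real_power_entry n U lam (s + real k) i j < 0" if "k \<le> K" for k
  proof (rule ccontr)
    assume "\<not> (\<exists>j<n. real_power_entry n U lam (s + real k) i j < 0)"
    then have "\<forall>j<n. 0 \<le> real_power_entry n U lam (s + real k + real (K - k)) i j"
      using real_power_entry_row_nonneg_add_nat[OF i] by (meson not_less)
    then show False using neg_t \<open>j0 < n\<close> that unfolding s_def by (auto simp: of_nat_diff)
  qed
  then obtain J where J: "\<forall>k\<in>{1..K}. J k < n \<and> real_power_entry n U lam (s + real k) i (J k) < 0"
    by (metis atLeastAtMost_iff)
  have J_ne: "i \<noteq> J k" if "k \<in> {1..K}" for k
    using J that real_power_entry_diag_nonneg[of n U lam "s + real k" i] by force
  have "sign_change_entry n U i (J k) > 2" if k: "k \<in> {1..K}" for k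
    using off_diagonal_entry_nonneg[OF sorted i _ J_ne[OF k], of "s + real k"] J k s by force
  then have "J ` {1..K} \<subseteq> {j. j < n \<and> sign_change_entry n U i j > 2}"
    using J by blast
  moreover have "inj_on J {1..K}"
  proof (rule inj_onI, rule ccontr)
    fix k k' assume kk: "k \<in> {1..K}" "k' \<in> {1..K}" "J k = J k'" "k \<noteq> k'"
    then have j: "J k < n" and "real_power_entry n U lam (s + real k) i (J k) < 0"
      "real_power_entry n U lam (s + real k') i (J k) < 0"
      using J[rule_format, OF kk(1)] J[rule_format, OF kk(2)] by simp_all
    moreover have "1 \<le> s + real k" "1 \<le> s + real k'" using kk s by auto
    moreover have "real k + 1 \<le> real k' \<or> real k' + 1 \<le> real k" using kk by linarith
    ultimately show False
      using off_diagonal_entry_not_negative_twice[OF sorted i j J_ne[OF kk(1)] le_4[rule_format, OF j]]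
      by (smt (verit))
  qed
  ultimately have "card {1..K} \<le> card {j. j < n \<and> sign_change_entry n U i j > 2}"
    by (intro card_inj_on_le) auto
  then have "card {1..K} \<le> M" using card_gt_2 by linarith
  then show False using K by simp
qed

end

lemma Least_nonneg_threshold_le:
  fixes g :: "real \<Rightarrow> real"
  assumes cont: "continuous_on UNIV g" and "0 \<le> m" and "\<forall>t\<ge>m. 0 \<le> g t"
  shows "(LEAST m :: real. m \<ge> 0 \<and> (\<forall>t\<ge>m. g t \<ge> 0)) \<le> m"
proof -
  define S where "S = {m :: real. m \<ge> 0 \<and> (\<forall>t\<ge>m. g t \<ge> 0)}"
  have "m \<in> S" "bdd_below S" using assms unfolding S_def by (auto intro: bdd_belowI[of _ 0])
  define m0 where "m0 = Inf S"
  have lower: "m0 \<le> m'" if "m' \<in> S" for m'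
    unfolding m0_def using that \<open>bdd_below S\<close> by (rule cInf_lower)
  have "0 \<le> m0" unfolding m0_def using \<open>m \<in> S\<close> by (intro cInf_greatest) (auto simp: S_def)
  have above: "0 \<le> g t" if lt: "m0 < t" for t
  proof -
    obtain m' where "m' \<in> S" "m' < t"
      using lt cInf_less_iff[of S t] \<open>m \<in> S\<close> \<open>bdd_below S\<close> unfolding m0_def by blast
    then show ?thesis unfolding S_def by auto
  qed
  \<comment> \<open>By continuity the infimum belongs to \<open>S\<close>, so the \<open>LEAST\<close> is not a junk value.\<close>
  have "0 \<le> g m0"
  proof (rule tendsto_lowerbound)
    have "isCont g m0" using cont by (simp add: continuous_on_eq_continuous_at)
    then show "(g \<longlongrightarrow> g m0) (at_right m0)" by (simp add: isCont_def filterlim_at_split)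
    show "\<forall>\<^sub>F t in at_right m0. 0 \<le> g t"
      using eventually_at_right_less by (rule eventually_mono) (rule above)
  qed simp
  then have "\<forall>t\<ge>m0. 0 \<le> g t" using above by (metis order_le_imp_less_or_eq)
  then have "m0 \<in> S" unfolding S_def using \<open>0 \<le> m0\<close> by simp
  then have "(LEAST m :: real. m \<ge> 0 \<and> (\<forall>t\<ge>m. g t \<ge> 0)) = m0"
    using lower unfolding S_def by (intro Least_equality) auto
  then show ?thesis using lower[OF \<open>m \<in> S\<close>] by simp
qed

lemma critical_exponent_row_le:
  assumes "doubly_nonnegative n A" and "real_orthogonal n U"
    and "A = U * mat_diag n lam * transpose_mat U"
    and "\<forall>k l. k \<le> l \<and> l < n \<longrightarrow> lam l \<le> lam k" and "\<forall>k<n. lam k > 0"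
    and "i < n" and "\<forall>j<n. sign_change_entry n U i j \<le> 4"
    and "card {j. j < n \<and> sign_change_entry n U i j > 2} \<le> M" and "j < n"
  shows "critical_exponent n U lam i j \<le> real M + 1"
  unfolding critical_exponent_def
proof (rule Least_nonneg_threshold_le)
  show "continuous_on UNIV (\<lambda>t. real_power_entry n U lam t i j)"
    unfolding real_power_entry_eq_exp_sum[OF assms(1-3,5)] by (rule continuous_on_exp_sum)
  show "\<forall>t\<ge>real M + 1. 0 \<le> real_power_entry n U lam t i j"
    using real_power_entry_row_nonneg[OF assms(1-3,5,4,6-8) _ assms(9)] by blast
qed simp

theorem lemma4p3:
  fixes n M :: nat and A U :: "real mat" and lam :: "nat \<Rightarrow> real"
  assumes dnn: "doubly_nonnegative n A"
    and inv: "det A \<noteq> 0"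
    and orth: "real_orthogonal n U"
    and decomp: "A = U * mat_diag n lam * transpose_mat U"
    and sorted: "\<forall>k l. k \<le> l \<and> l < n \<longrightarrow> lam l \<le> lam k"
    and pos: "\<forall>k<n. lam k > 0"
  shows "\<forall>i<n. ((\<forall>j<n. sign_change_entry n U i j \<le> 4) \<and>
                   card {j. j < n \<and> sign_change_entry n U i j > 2} \<le> M
                 \<longrightarrow> (\<forall>j<n. critical_exponent n U lam i j \<le> real M + 1))
             \<and> ((\<forall>j<n. sign_change_entry n U j i \<le> 4) \<and>
                   card {j. j < n \<and> sign_change_entry n U j i > 2} \<le> M
                 \<longrightarrow> (\<forall>j<n. critical_exponent n U lam j i \<le> real M + 1))"
proof (intro allI impI conjI)
  fix i j assume "i < n" "j < n"
  show "critical_exponent n U lam i j \<le> real M + 1"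
    if "(\<forall>j<n. sign_change_entry n U i j \<le> 4) \<and> card {j. j < n \<and> sign_change_entry n U i j > 2} \<le> M"
    using critical_exponent_row_le[OF dnn orth decomp sorted pos \<open>i < n\<close> _ _ \<open>j < n\<close>] that
    by blast
  then show "critical_exponent n U lam j i \<le> real M + 1"
    if "(\<forall>j<n. sign_change_entry n U j i \<le> 4) \<and> card {j. j < n \<and> sign_change_entry n U j i > 2} \<le> M"
    using that unfolding sign_change_entry_commute[of n U _ i] critical_exponent_commute[of n U lam _ i]
    by blast
qed

end
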